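(* Let $a,b,g,m,n>0$ and $0<e<1$, and consider the planar system $$\dot x=a-ex-\frac{xy}{1+gy},\qquad \dot y=\frac{xy}{1+gy}-y-\frac{my}{b+ny}.$$ Let $a_1=(eg+1)n$, $a_2=(b+m)(eg+1)+n(e-a)$, $a_3=e(b+m)-ab$, $\Delta=a_2^2-4a_1a_3$, $$a_4=\frac{[en-(b-m)(eg+1)]+\sqrt{4m(eg+1)[ne-b(eg+1)]}}{n},$$ $l=n(eg+g+1)$, $$s_1=(a_1a_3-a_2^2)nl+a_1a_2(en^2+2bl)-a_1^2\left(\frac{b^2l}{n}+2ben+bmg-mn\right),$$ $$s_2=(a_2^3-3a_1a_2a_3)nl+(2a_1^2a_3-a_1a_2^2)(en^2+2bl)+a_1^2a_2\left(\frac{b^2l}{n}+2ben+bmg-mn\right)-2a_1^3eb^2,$$ and $w=s_1\sqrt{\Delta}+s_2$. Suppose $n>\frac{(eg+1)b^2+m(eg+1)b}{me}$ and $a_4<a\le\frac{e(m+b)}{b}$. Let $y_1=\frac{-a_2+\sqrt{\Delta}}{2a_1}$ and $x_1=\frac{a(1+gy_1)}{e+(eg+1)y_1}$, so that $E_1=(x_1,y_1)$ is an endemic equilibrium of the system. Then: (1) if $w<0$, $E_1$ is a stable node or focus; (2) if $w=0$, $E_1$ is a weak center; (3) if $w>0$, $E_1$ is an unstable node or focus.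
   Context: The system is a rescaled SIR epidemic model with saturated infection rate and saturated treatment rate. A "weak center" means an equilibrium whose Jacobian has zero trace and positive determinant (purely imaginary eigenvalues). *)

theory Defs
  imports "HOL-Analysis.Analysis"
begin

definition sir_P :: "real \<Rightarrow> real \<Rightarrow> real \<Rightarrow> real \<Rightarrow> real \<Rightarrow> real" where
  "sir_P a e g x y = a - e * x - x * y / (1 + g * y)"

definition sir_Q :: "real \<Rightarrow> real \<Rightarrow> real \<Rightarrow> real \<Rightarrow> real \<Rightarrow> real \<Rightarrow> real" where
  "sir_Q b g m n x y = x * y / (1 + g * y) - y - m * y / (b + n * y)"

definition jac_trace ::
  "(real \<Rightarrow> real \<Rightarrow> real) \<Rightarrow> (real \<Rightarrow> real \<Rightarrow> real) \<Rightarrow> real \<Rightarrow> real \<Rightarrow> real" where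
  "jac_trace P Q x0 y0 = deriv (\<lambda>x. P x y0) x0 + deriv (\<lambda>y. Q x0 y) y0"

definition jac_det ::
  "(real \<Rightarrow> real \<Rightarrow> real) \<Rightarrow> (real \<Rightarrow> real \<Rightarrow> real) \<Rightarrow> real \<Rightarrow> real \<Rightarrow> real" where
  "jac_det P Q x0 y0 =
     deriv (\<lambda>x. P x y0) x0 * deriv (\<lambda>y. Q x0 y) y0
     - deriv (\<lambda>y. P x0 y) y0 * deriv (\<lambda>x. Q x y0) x0"

text \<open>Node or focus: determinant positive (both eigenvalues have real parts of the same sign,
  no saddle); stable if trace negative, unstable if trace positive.\<close>

definition stable_node_or_focus where
  "stable_node_or_focus P Q x0 y0 \<longleftrightarrow> jac_det P Q x0 y0 > 0 \<and> jac_trace P Q x0 y0 < 0"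

definition unstable_node_or_focus where
  "unstable_node_or_focus P Q x0 y0 \<longleftrightarrow> jac_det P Q x0 y0 > 0 \<and> jac_trace P Q x0 y0 > 0"

definition weak_center where
  "weak_center P Q x0 y0 \<longleftrightarrow> jac_det P Q x0 y0 > 0 \<and> jac_trace P Q x0 y0 = 0"

end

theory Submission
  imports Defs "HOL-Library.Quadratic_Discriminant"
begin

(* At a point with y > 0 the second equation vanishes iff x (b + n y) = (1 + g y)(b + n y + m);
   together with the first one this leaves the quadratic q(y) = a1 y^2 + a2 y + a3 = 0, of which
   y1 is the larger root.  The hypotheses on n and a make the radicand in a4 exceed
   (2 b (e g + 1))^2, which forces a2 < 0 and Delta > 0, hence y1 > 0.  Eliminating x by the
   nullcline relation, (det J) (1 + g y)(b + n y) = y q'(y), and q'(y1) = sqrt Delta > 0, so E1 is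
   never a saddle; and modulo q, s1 q'(y) + s2 = 2 a1^3 (1 + g y)(b + n y)^2 (tr J), so w is a
   positive multiple of the trace at E1. *)

(* No hypothesis on 1 + g y: both sides contain the same quotient y / (1 + g y), which is 0
   when the denominator vanishes. *)
lemma sir_P_deriv_x: "deriv (\<lambda>x. sir_P a e g x y) x0 = - e - y / (1 + g * y)"
proof (rule DERIV_imp_deriv)
  define c where "c = y / (1 + g * y)"
  have "(\<lambda>x. sir_P a e g x y) = (\<lambda>x. a - e * x - x * c)"
    by (simp add: sir_P_def c_def fun_eq_iff)
  then show "((\<lambda>x. sir_P a e g x y) has_real_derivative - e - y / (1 + g * y)) (at x0)"
    unfolding c_def[symmetric] by (auto intro!: derivative_eq_intros)
qed

lemma sir_P_deriv_y:
  assumes "1 + g * y0 \<noteq> 0"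
  shows "deriv (\<lambda>y. sir_P a e g x y) y0 = - x / (1 + g * y0) ^ 2"
  unfolding sir_P_def using assms
  by (intro DERIV_imp_deriv) (auto intro!: derivative_eq_intros simp: field_simps power2_eq_square)

lemma sir_Q_deriv_x: "deriv (\<lambda>x. sir_Q b g m n x y) x0 = y / (1 + g * y)"
proof (rule DERIV_imp_deriv)
  define c where "c = y / (1 + g * y)"
  have "(\<lambda>x. sir_Q b g m n x y) = (\<lambda>x. x * c - y - m * y / (b + n * y))"
    by (simp add: sir_Q_def c_def fun_eq_iff)
  then show "((\<lambda>x. sir_Q b g m n x y) has_real_derivative y / (1 + g * y)) (at x0)"
    unfolding c_def[symmetric] by (auto intro!: derivative_eq_intros)
qed

lemma sir_Q_deriv_y:
  assumes "1 + g * y0 \<noteq> 0" "b + n * y0 \<noteq> 0"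
  shows "deriv (\<lambda>y. sir_Q b g m n x y) y0 = x / (1 + g * y0) ^ 2 - 1 - m * b / (b + n * y0) ^ 2"
  unfolding sir_Q_def using assms
  by (intro DERIV_imp_deriv) (auto intro!: derivative_eq_intros simp: field_simps power2_eq_square)

lemma sir_P_eq_0_iff:
  assumes "1 + g * y \<noteq> 0"
  shows "sir_P a e g x y = 0 \<longleftrightarrow> x * (e + (e * g + 1) * y) = a * (1 + g * y)"
  using assms by (simp add: sir_P_def field_simps) argo

lemma sir_Q_eq_0_iff:
  assumes "y \<noteq> 0" "1 + g * y \<noteq> 0" "b + n * y \<noteq> 0"
  shows "sir_Q b g m n x y = 0 \<longleftrightarrow> x * (b + n * y) = (1 + g * y) * (b + n * y + m)"
proof -
  have "sir_Q b g m n x y * ((1 + g * y) * (b + n * y))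
      = y * (x * (b + n * y) - (1 + g * y) * (b + n * y + m))"
    using assms by (simp add: sir_Q_def divide_simps) (simp add: algebra_simps)
  then show ?thesis
    using assms by (metis (no_types, lifting) eq_iff_diff_eq_0 mult_eq_0_iff)
qed

lemma sir_equilibrium_iff:
  assumes "y \<noteq> 0" "1 + g * y \<noteq> 0" "b + n * y \<noteq> 0" "e + (e * g + 1) * y \<noteq> 0"
  shows "sir_P a e g x y = 0 \<and> sir_Q b g m n x y = 0 \<longleftrightarrow>
    x = a * (1 + g * y) / (e + (e * g + 1) * y) \<and>
    (e * g + 1) * n * y ^ 2 + ((b + m) * (e * g + 1) + n * (e - a)) * y + (e * (b + m) - a * b) = 0"
proof -
  define h u E where "h = 1 + g * y" and "u = b + n * y" and "E = e + (e * g + 1) * y"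
  have "E \<noteq> 0"
    using assms(4) by (simp add: E_def)
  have "sir_P a e g x y = 0 \<and> sir_Q b g m n x y = 0 \<longleftrightarrow> x = a * h / E \<and> x * u = h * (u + m)"
    using assms by (auto simp: sir_P_eq_0_iff sir_Q_eq_0_iff h_def u_def E_def field_simps)
  also have "\<dots> \<longleftrightarrow> x = a * h / E \<and> h * (a * u) = h * ((u + m) * E)"
  proof (intro conj_cong refl)
    assume "x = a * h / E"
    then have "x * u * E = h * (a * u)"
      using \<open>E \<noteq> 0\<close> by simp
    then show "x * u = h * (u + m) \<longleftrightarrow> h * (a * u) = h * ((u + m) * E)"
      using \<open>E \<noteq> 0\<close> by (metis mult.assoc mult.commute mult_cancel_right)
  qed
  also have "\<dots> \<longleftrightarrow> x = a * h / E \<and> a * u = (u + m) * E"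
    using assms(2) by (simp add: h_def)
  also have "\<dots> \<longleftrightarrow> x = a * h / E \<and>
      (e * g + 1) * n * y ^ 2 + ((b + m) * (e * g + 1) + n * (e - a)) * y + (e * (b + m) - a * b) = 0"
    unfolding u_def E_def by (auto simp: algebra_simps power2_eq_square)
  finally show ?thesis
    unfolding h_def E_def .
qed

lemma sir_equilibrium_quadratic:
  assumes "sir_P a e g x y = 0" "sir_Q b g m n x y = 0"
    and "y \<noteq> 0" "1 + g * y \<noteq> 0" "b + n * y \<noteq> 0"
  shows "(e * g + 1) * n * y ^ 2 + ((b + m) * (e * g + 1) + n * (e - a)) * y + (e * (b + m) - a * b) = 0"
proof -
  define h u where "h = 1 + g * y" and "u = b + n * y"
  have xu: "x * u = h * (u + m)"
    using sir_Q_eq_0_iff[OF assms(3-5)] assms(2) by (simp add: h_def u_def)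
  have xE: "x * (e + (e * g + 1) * y) = a * h"
    using sir_P_eq_0_iff[OF assms(4)] assms(1) by (simp add: h_def)
  have "h * (a * u) = h * ((e + (e * g + 1) * y) * (u + m))"
    by (metis xu xE mult.commute mult.left_commute)
  then have "a * u = (e + (e * g + 1) * y) * (u + m)"
    using assms(4) by (simp add: h_def)
  then show ?thesis
    unfolding u_def by (simp add: algebra_simps power2_eq_square)
qed

lemma sir_jac_det_at_equilibrium:
  assumes "sir_P a e g x y = 0" "sir_Q b g m n x y = 0"
    and "y \<noteq> 0" "1 + g * y \<noteq> 0" "b + n * y \<noteq> 0"
  shows "jac_det (sir_P a e g) (sir_Q b g m n) x y * ((1 + g * y) * (b + n * y))
    = y * (2 * (e * g + 1) * n * y + (b + m) * (e * g + 1) + n * (e - a))"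
proof -
  define h u where "h = 1 + g * y" and "u = b + n * y"
  have xu: "x * u = h * (u + m)"
    using sir_Q_eq_0_iff[OF assms(3-5)] assms(2) by (simp add: h_def u_def)
  note quadratic = sir_equilibrium_quadratic[OF assms]
  have "h \<noteq> 0" "u \<noteq> 0"
    using assms(4,5) by (simp_all add: h_def u_def)
  then have x: "x = h * (u + m) / u"
    using xu by (simp add: field_simps)
  have "jac_det (sir_P a e g) (sir_Q b g m n) x y * (h * u ^ 2)
      = (- e - y / h) * (x / h ^ 2 - 1 - m * b / u ^ 2) * (h * u ^ 2) + x / h ^ 2 * (y / h) * (h * u ^ 2)"
    using assms(4,5) unfolding jac_det_def h_def u_def
    by (simp add: sir_P_deriv_x sir_P_deriv_y sir_Q_deriv_x sir_Q_deriv_y algebra_simps)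
  also have "\<dots> = e * h * u ^ 2 - e * (u + m) * u + e * m * b * h + y * (u ^ 2 + m * b)"
    using \<open>h \<noteq> 0\<close> \<open>u \<noteq> 0\<close> unfolding x by (simp add: field_simps power2_eq_square)
  also have "\<dots> = y * (2 * (e * g + 1) * n * y + (b + m) * (e * g + 1) + n * (e - a)) * u"
    using quadratic unfolding h_def u_def by algebra
  finally show ?thesis
    using assms(5) unfolding h_def u_def by (simp add: power2_eq_square)
qed

lemma sir_jac_trace_at_equilibrium:
  fixes a b e g m n x y :: real
  defines "a1 \<equiv> (e * g + 1) * n"
      and "a2 \<equiv> (b + m) * (e * g + 1) + n * (e - a)"
      and "a3 \<equiv> e * (b + m) - a * b"
      and "l \<equiv> n * (e * g + g + 1)"
  defines "s1 \<equiv> (a1 * a3 - a2 ^ 2) * n * l + a1 * a2 * (e * n ^ 2 + 2 * b * l)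
                 - a1 ^ 2 * (b ^ 2 * l / n + 2 * b * e * n + b * m * g - m * n)"
      and "s2 \<equiv> (a2 ^ 3 - 3 * a1 * a2 * a3) * n * l
                 + (2 * a1 ^ 2 * a3 - a1 * a2 ^ 2) * (e * n ^ 2 + 2 * b * l)
                 + a1 ^ 2 * a2 * (b ^ 2 * l / n + 2 * b * e * n + b * m * g - m * n)
                 - 2 * a1 ^ 3 * e * b ^ 2"
  assumes "sir_P a e g x y = 0" "sir_Q b g m n x y = 0"
    and "y \<noteq> 0" "1 + g * y \<noteq> 0" "b + n * y \<noteq> 0" "n \<noteq> 0"
  shows "s1 * (2 * a1 * y + a2) + s2
    = 2 * a1 ^ 3 * ((1 + g * y) * (b + n * y) ^ 2) * jac_trace (sir_P a e g) (sir_Q b g m n) x y"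
proof -
  define h u where "h = 1 + g * y" and "u = b + n * y"
  have "h \<noteq> 0" "u \<noteq> 0"
    using assms(10,11) by (simp_all add: h_def u_def)
  have quadratic: "a1 * y ^ 2 + a2 * y + a3 = 0"
    using sir_equilibrium_quadratic[OF assms(7-11)] by (simp add: a1_def a2_def a3_def)
  have xu: "x * u = h * (u + m)"
    using sir_Q_eq_0_iff[OF assms(9-11)] assms(8) by (simp add: h_def u_def)
  have "jac_trace (sir_P a e g) (sir_Q b g m n) x y * (h * u ^ 2)
      = (- e - y / h + (x / h ^ 2 - 1 - m * b / u ^ 2)) * (h * u ^ 2)"
    using assms(10,11) unfolding jac_trace_def h_def u_def
    by (simp add: sir_P_deriv_x sir_Q_deriv_y)
  also have "\<dots> = u ^ 2 + m * u - (e + 1) * h * u ^ 2 - y * u ^ 2 - m * b * h"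
    using \<open>h \<noteq> 0\<close> \<open>u \<noteq> 0\<close> xu by (simp add: field_simps power2_eq_square)
  finally have trace: "jac_trace (sir_P a e g) (sir_Q b g m n) x y * (h * u ^ 2)
      = u ^ 2 + m * u - (e + 1) * h * u ^ 2 - y * u ^ 2 - m * b * h" .
  have "b ^ 2 * l / n = b ^ 2 * (e * g + g + 1)"
    using assms(12) by (simp add: l_def)
  \<comment> \<open>the difference of the two sides is a polynomial multiple of the quadratic\<close>
  then have "s1 * (2 * a1 * y + a2) + s2
      = 2 * a1 ^ 3 * (u ^ 2 + m * u - (e + 1) * h * u ^ 2 - y * u ^ 2 - m * b * h)"
    using quadratic unfolding s1_def s2_def a1_def a2_def a3_def l_def h_def u_def by algebra
  also have "\<dots> = 2 * a1 ^ 3 * (h * u ^ 2) * jac_trace (sir_P a e g) (sir_Q b g m n) x y"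
    unfolding trace[symmetric] by (simp add: mult.commute)
  finally show ?thesis
    unfolding h_def u_def .
qed

lemma sir_quadratic_coeff_signs:
  fixes a b g m n e :: real
  assumes "e * g + 1 > 0" "n > 0"
  defines "a2 \<equiv> (b + m) * (e * g + 1) + n * (e - a)"
      and "a3 \<equiv> e * (b + m) - a * b"
  defines "\<Delta> \<equiv> a2 ^ 2 - 4 * ((e * g + 1) * n) * a3"
  assumes "(e * g + 1) * b * (b + m) < m * e * n"
    and "((e * n - (b - m) * (e * g + 1))
           + sqrt (4 * m * (e * g + 1) * (n * e - b * (e * g + 1)))) / n < a"
  shows "a2 < 0" "\<Delta> > 0"
proof -
  define k R where "k = e * g + 1" and "R = sqrt (4 * m * k * (n * e - b * k))"
  have radicand: "(2 * b * k) ^ 2 < 4 * m * k * (n * e - b * k)"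
  proof -
    have "4 * k * (k * b * (b + m)) < 4 * k * (m * e * n)"
      using assms(1,6) by (simp add: k_def mult.assoc)
    then show ?thesis
      by (simp add: algebra_simps power2_eq_square)
  qed
  then have "2 * b * k < R"
    unfolding R_def by (rule real_less_rsqrt)
  have "0 \<le> 4 * m * k * (n * e - b * k)"
    using radicand by (rule order.trans[OF zero_le_power2 less_imp_le])
  then have "0 \<le> R" and R2: "R ^ 2 = 4 * m * k * (n * e - b * k)"
    unfolding R_def by simp_all
  define D where "D = n * a - e * n + (b - m) * k"
  have "R < D"
    using assms(2,7) by (simp add: R_def k_def D_def field_simps)
  show "a2 < 0"
    using \<open>2 * b * k < R\<close> \<open>R < D\<close> by (simp add: a2_def D_def k_def algebra_simps)
  have "R ^ 2 < D ^ 2"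
    using \<open>0 \<le> R\<close> \<open>R < D\<close> by (simp add: power_strict_mono)
  moreover have "\<Delta> = D ^ 2 - R ^ 2"
    unfolding R2 \<Delta>_def a2_def a3_def D_def k_def by (simp add: algebra_simps power2_eq_square)
  ultimately show "\<Delta> > 0"
    by simp
qed

lemma sir_endemic_root:
  fixes a b g m n e :: real
  assumes "e * g + 1 > 0" "n > 0"
    and "(e * g + 1) * b * (b + m) < m * e * n"
    and "((e * n - (b - m) * (e * g + 1))
           + sqrt (4 * m * (e * g + 1) * (n * e - b * (e * g + 1)))) / n < a"
  defines "a1 \<equiv> (e * g + 1) * n"
      and "a2 \<equiv> (b + m) * (e * g + 1) + n * (e - a)"
      and "a3 \<equiv> e * (b + m) - a * b"
  defines "\<Delta> \<equiv> a2 ^ 2 - 4 * a1 * a3"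
  defines "y1 \<equiv> (- a2 + sqrt \<Delta>) / (2 * a1)"
  shows "y1 > 0" "a1 * y1 ^ 2 + a2 * y1 + a3 = 0" "sqrt \<Delta> = 2 * a1 * y1 + a2" "sqrt \<Delta> > 0"
proof -
  have "a2 < 0" "\<Delta> > 0"
    using sir_quadratic_coeff_signs[OF assms(1-4)] by (simp_all add: a1_def a2_def a3_def \<Delta>_def)
  have "a1 > 0"
    using assms(1,2) by (simp add: a1_def)
  show "a1 * y1 ^ 2 + a2 * y1 + a3 = 0"
    using discriminant_nonneg[of a1 a2 a3 y1] \<open>a1 > 0\<close> \<open>\<Delta> > 0\<close>
    by (simp add: discrim_def \<Delta>_def y1_def)
  show "sqrt \<Delta> = 2 * a1 * y1 + a2"
    using \<open>a1 > 0\<close> by (simp add: y1_def)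
  show "sqrt \<Delta> > 0"
    using \<open>\<Delta> > 0\<close> by simp
  then show "y1 > 0"
    unfolding y1_def using \<open>a2 < 0\<close> \<open>a1 > 0\<close> by (intro divide_pos_pos) linarith+
qed

lemma classify_by_scaled_trace:
  assumes "jac_det P Q x y > 0" "c > 0" "w = c * jac_trace P Q x y"
  shows "(w < 0 \<longrightarrow> stable_node_or_focus P Q x y)
    \<and> (w = 0 \<longrightarrow> weak_center P Q x y)
    \<and> (w > 0 \<longrightarrow> unstable_node_or_focus P Q x y)"
  using assms
  by (auto simp: stable_node_or_focus_def weak_center_def unstable_node_or_focus_def
      mult_less_0_iff zero_less_mult_iff)

theorem theorem2p4:
  fixes a b g m n e :: real
  assumes pos: "a > 0" "b > 0" "g > 0" "m > 0" "n > 0" "0 < e" "e < 1"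
  defines "a1 \<equiv> (e * g + 1) * n"
      and "a2 \<equiv> (b + m) * (e * g + 1) + n * (e - a)"
      and "a3 \<equiv> e * (b + m) - a * b"
  defines "\<Delta> \<equiv> a2 ^ 2 - 4 * a1 * a3"
      and "a4 \<equiv> ((e * n - (b - m) * (e * g + 1))
                 + sqrt (4 * m * (e * g + 1) * (n * e - b * (e * g + 1)))) / n"
      and "l \<equiv> n * (e * g + g + 1)"
  defines "s1 \<equiv> (a1 * a3 - a2 ^ 2) * n * l + a1 * a2 * (e * n ^ 2 + 2 * b * l)
                 - a1 ^ 2 * (b ^ 2 * l / n + 2 * b * e * n + b * m * g - m * n)"
      and "s2 \<equiv> (a2 ^ 3 - 3 * a1 * a2 * a3) * n * l
                 + (2 * a1 ^ 2 * a3 - a1 * a2 ^ 2) * (e * n ^ 2 + 2 * b * l)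
                 + a1 ^ 2 * a2 * (b ^ 2 * l / n + 2 * b * e * n + b * m * g - m * n)
                 - 2 * a1 ^ 3 * e * b ^ 2"
  defines "w \<equiv> s1 * sqrt \<Delta> + s2"
  defines "y1 \<equiv> (- a2 + sqrt \<Delta>) / (2 * a1)"
  defines "x1 \<equiv> a * (1 + g * y1) / (e + (e * g + 1) * y1)"
  defines "P \<equiv> sir_P a e g" and "Q \<equiv> sir_Q b g m n"
  assumes hn: "n > ((e * g + 1) * b ^ 2 + m * (e * g + 1) * b) / (m * e)"
      and ha: "a4 < a" "a \<le> e * (m + b) / b"
  shows "(x1 > 0 \<and> y1 > 0 \<and> P x1 y1 = 0 \<and> Q x1 y1 = 0)
         \<and> (w < 0 \<longrightarrow> stable_node_or_focus P Q x1 y1)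
         \<and> (w = 0 \<longrightarrow> weak_center P Q x1 y1)
         \<and> (w > 0 \<longrightarrow> unstable_node_or_focus P Q x1 y1)"
proof -
  have "e * g + 1 > 0"
    using pos by (simp add: add_pos_pos)
  moreover have "(e * g + 1) * b * (b + m) < m * e * n"
    using hn pos by (simp add: divide_less_eq algebra_simps power2_eq_square)
  ultimately have "y1 > 0" and root: "a1 * y1 ^ 2 + a2 * y1 + a3 = 0"
    and sqrt_\<Delta>: "sqrt \<Delta> = 2 * a1 * y1 + a2" and "sqrt \<Delta> > 0"
    using sir_endemic_root[of e g n b m a] pos(5) ha(1)
    unfolding y1_def \<Delta>_def a1_def a2_def a3_def a4_def by auto
  define h u where "h = 1 + g * y1" and "u = b + n * y1"
  have "h > 0" "u > 0" "e + (e * g + 1) * y1 > 0"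
    using pos \<open>y1 > 0\<close> \<open>e * g + 1 > 0\<close> by (simp_all add: h_def u_def add_pos_pos)
  then have equilibrium: "P x1 y1 = 0 \<and> Q x1 y1 = 0"
    using sir_equilibrium_iff[of y1 g b n e a x1 m] root \<open>y1 > 0\<close>
    by (simp add: P_def Q_def x1_def h_def u_def a1_def a2_def a3_def)
  have "x1 > 0"
    using pos \<open>h > 0\<close> \<open>e + (e * g + 1) * y1 > 0\<close> by (simp add: x1_def h_def)
  have "jac_det P Q x1 y1 * (h * u) = y1 * sqrt \<Delta>"
    using sir_jac_det_at_equilibrium[of a e g x1 y1 b m n] equilibrium \<open>y1 > 0\<close> \<open>h > 0\<close> \<open>u > 0\<close>
    by (simp add: P_def Q_def h_def u_def sqrt_\<Delta> a1_def a2_def)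
  then have "jac_det P Q x1 y1 > 0"
    using \<open>y1 > 0\<close> \<open>sqrt \<Delta> > 0\<close> \<open>h > 0\<close> \<open>u > 0\<close> by (metis mult_pos_pos zero_less_mult_pos2)
  moreover have "w = 2 * a1 ^ 3 * (h * u ^ 2) * jac_trace P Q x1 y1"
    unfolding w_def sqrt_\<Delta> unfolding s1_def s2_def l_def a1_def a2_def a3_def P_def Q_def h_def u_def
    by (rule sir_jac_trace_at_equilibrium)
      (use equilibrium \<open>y1 > 0\<close> \<open>h > 0\<close> \<open>u > 0\<close> pos(5) in \<open>simp_all add: P_def Q_def h_def u_def\<close>)
  moreover have "2 * a1 ^ 3 * (h * u ^ 2) > 0"
    using \<open>e * g + 1 > 0\<close> pos(5) \<open>h > 0\<close> \<open>u > 0\<close> by (simp add: a1_def)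
  ultimately show ?thesis
    using \<open>x1 > 0\<close> \<open>y1 > 0\<close> equilibrium classify_by_scaled_trace by blast
qed

end
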